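(* A pseudo $J$-type algebra $\mathfrak n=\mathfrak n_{-2}\oplus\mathfrak n_{-1}$ with $\dim\mathfrak n_{-2}\geq 3$ satisfying the general $J^2$-condition is rigid.
   Context: A real graded 2-step nilpotent Lie algebra $\mathfrak n=\mathfrak n_{-2}\oplus\mathfrak n_{-1}$ has $[\mathfrak n_{-1},\mathfrak n_{-1}]=\mathfrak n_{-2}$, $\mathfrak n_{-2}$ central and equal to the center of $\mathfrak n$. A real $M$-type algebra is such an $\mathfrak n$ with a non-degenerate symmetric bilinear form $\langle\cdot,\cdot\rangle$ whose restriction to $\mathfrak n_{-2}$ is non-degenerate and with $\mathfrak n_{-2}\perp\mathfrak n_{-1}$. The $J$-map $J\colon\mathfrak n_{-2}\to\operatorname{End}(\mathfrak n_{-1})$ is defined by $\langle J_zx,y\rangle=\langle z,[x,y]\rangle$ for $x,y\in\mathfrak n_{-1}$, $z\in\mathfrak n_{-2}$. It is of pseudo $J$-type if there is an orthonormal basis $z_1,\dots,z_k$ of $\mathfrak n_{-2}$ with $J_{z_i}^2=\pm\mathrm{Id}_{\mathfrak n_{-1}}$ for each $i$. A pseudo $J$-type algebra satisfies the general $J^2$-condition if for every $x\in\mathfrak n_{-1}$ and every pair $z,z'\in\mathfrak n_{-2}$ with $\langle z,z'\rangle=0$ there exists $z''\in\mathfrak n_{-2}$ with $J_zJ_{z'}x=J_{z''}x$. The Tanaka prolongation of $\mathfrak n$ is the maximal graded Lie algebra $\hat{\mathfrak n}=\bigoplus_{i\ge -2}\hat{\mathfrak n}_i$ with negative part equal to $\mathfrak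 n$ such that for $k\ge0$ any $X\in\hat{\mathfrak n}_k$ with $[X,\mathfrak n_{-1}]=0$ is zero; $\mathfrak n$ is rigid if $\hat{\mathfrak n}$ is finite dimensional. *)

theory Defs
  imports "HOL-Analysis.Analysis"
begin

text \<open>
  A real graded 2-step nilpotent Lie algebra n = n_{-2} + n_{-1} with n_{-1} = 'v and
  n_{-2} = 'w (both finite dimensional real vector spaces) is given by its only
  nontrivial bracket component b : n_{-1} x n_{-1} -> n_{-2}; the full bracket on n
  is [(x,z),(x',z')] = (0, b x x').  Jacobi holds automatically.
\<close>

definition graded_2step :: "('v::real_vector \<Rightarrow> 'v \<Rightarrow> 'w::real_vector) \<Rightarrow> bool" where
  "graded_2step b \<longleftrightarrow>
     bilinear b \<and> (\<forall>x y. b x y = - b y x) \<and>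
     span {b x y | x y. True} = UNIV \<and>
     (\<forall>x. (\<forall>y. b x y = 0) \<longrightarrow> x = 0)"
  \<comment> \<open>bilinear skew bracket; [n_{-1},n_{-1}] = n_{-2}; centre of n equals n_{-2}\<close>

definition mtype_algebra ::
  "('v::real_vector \<Rightarrow> 'v \<Rightarrow> 'w::real_vector) \<Rightarrow> ('v \<times> 'w \<Rightarrow> 'v \<times> 'w \<Rightarrow> real) \<Rightarrow> bool" where
  "mtype_algebra b Bf \<longleftrightarrow>
     graded_2step b \<and> bilinear Bf \<and> (\<forall>p q. Bf p q = Bf q p) \<and>
     (\<forall>p. (\<forall>q. Bf p q = 0) \<longrightarrow> p = 0) \<and>
     (\<forall>z. (\<forall>z'. Bf (0, z) (0, z') = 0) \<longrightarrow> z = 0) \<and>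
     (\<forall>x z. Bf (x, 0) (0, z) = 0)"

definition Jmap ::
  "('v::real_vector \<Rightarrow> 'v \<Rightarrow> 'w::real_vector) \<Rightarrow> ('v \<times> 'w \<Rightarrow> 'v \<times> 'w \<Rightarrow> real) \<Rightarrow> 'w \<Rightarrow> 'v \<Rightarrow> 'v" where
  "Jmap b Bf z x = (THE v. \<forall>y. Bf (v, 0) (y, 0) = Bf (0, z) (0, b x y))"

definition pseudo_Jtype ::
  "('v::real_vector \<Rightarrow> 'v \<Rightarrow> 'w::real_vector) \<Rightarrow> ('v \<times> 'w \<Rightarrow> 'v \<times> 'w \<Rightarrow> real) \<Rightarrow> bool" where
  "pseudo_Jtype b Bf \<longleftrightarrow> mtype_algebra b Bf \<and>
     (\<exists>Z. independent Z \<and> span Z = UNIV \<and>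
        (\<forall>z\<in>Z. \<forall>z'\<in>Z. z \<noteq> z' \<longrightarrow> Bf (0, z) (0, z') = 0) \<and>
        (\<forall>z\<in>Z. Bf (0, z) (0, z) = 1 \<or> Bf (0, z) (0, z) = -1) \<and>
        (\<forall>z\<in>Z. (\<forall>x. Jmap b Bf z (Jmap b Bf z x) = x) \<or>
                (\<forall>x. Jmap b Bf z (Jmap b Bf z x) = - x)))"

definition general_J2_condition ::
  "('v::real_vector \<Rightarrow> 'v \<Rightarrow> 'w::real_vector) \<Rightarrow> ('v \<times> 'w \<Rightarrow> 'v \<times> 'w \<Rightarrow> real) \<Rightarrow> bool" where
  "general_J2_condition b Bf \<longleftrightarrow>
     (\<forall>x z z'. Bf (0, z) (0, z') = 0 \<longrightarrow>
        (\<exists>z''. Jmap b Bf z (Jmap b Bf z' x) = Jmap b Bf z'' x))"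

text \<open>
  An element A of degree j (j \<ge> -2) of the
  prolongation is encoded (injectively) by the multilinear map
     [y_1,...,y_{j+2}] \<mapsto> [...[[A,y_1],y_2],...,y_{j+2}] \<in> n_{-2}
  on lists of elements of n_{-1} of length j+2 (value 0 on lists of other lengths).
  tanaka_prol b m is the set of encodings of the degree m-2 component.
  Degree -2: n_{-2};  degree -1: n_{-1} (x encoded by y \<mapsto> b x y);
  degree k \<ge> 0: linear phi1 : n_{-1} \<rightarrow> g_{k-1} (here phi1 y = \<lambda>ys. T (y#ys)) that, together
  with a linear phi2 : n_{-2} \<rightarrow> g_{k-2}, forms a derivation of n of degree k, i.e.
  phi2 [x,y] = [phi1 x, y] + [x, phi1 y]  and  0 = [phi1 u, w] + [u, phi2 w]
  (the latter checked on the spanning elements w = [x,y], using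
   [A,[x,y]] = [[A,x],y] - [[A,y],x]).
\<close>
fun tanaka_prol :: "('v::real_vector \<Rightarrow> 'v \<Rightarrow> 'w::real_vector) \<Rightarrow> nat \<Rightarrow> ('v list \<Rightarrow> 'w) set" where
  "tanaka_prol b 0 = {T. \<forall>ys. ys \<noteq> [] \<longrightarrow> T ys = 0}"
| "tanaka_prol b (Suc 0) =
     {T. \<exists>x. \<forall>ys. T ys = (case ys of [y] \<Rightarrow> b x y | _ \<Rightarrow> 0)}"
| "tanaka_prol b (Suc (Suc m)) =
     {T. T [] = 0 \<and>
         (\<forall>y. (\<lambda>ys. T (y # ys)) \<in> tanaka_prol b (Suc m)) \<and>
         (\<forall>ys. linear (\<lambda>y. T (y # ys))) \<and>
         (\<exists>phi2 :: 'w \<Rightarrow> ('v list \<Rightarrow> 'w).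
            (\<forall>ys. linear (\<lambda>w. phi2 w ys)) \<and>
            (\<forall>w. phi2 w \<in> tanaka_prol b m) \<and>
            (\<forall>x y. phi2 (b x y) = (\<lambda>ys. T (x # y # ys) - T (y # x # ys))) \<and>
            (\<forall>u x y. (\<lambda>ys. T (u # x # y # ys) - T (u # y # x # ys))
                      = (\<lambda>ys. phi2 (b x y) (u # ys))))}"

text \<open>Rigid: the full prolongation (direct sum of all degrees; the encodings of different
  degrees have disjoint supports) is finite dimensional, i.e. spanned by a finite set.\<close>
definition rigid :: "('v::real_vector \<Rightarrow> 'v \<Rightarrow> 'w::real_vector) \<Rightarrow> bool" where
  "rigid b \<longleftrightarrow>
     (\<exists>Bs :: ('v list \<Rightarrow> 'w) set. finite Bs \<and>
        (\<forall>m. \<forall>T \<in> tanaka_prol b m.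
           \<exists>c. T = (\<lambda>ys. \<Sum>\<beta>\<in>Bs. c \<beta> *\<^sub>R \<beta> ys)))"

end

theory Submission
  imports Defs
begin

text \<open>
  An element of degree k >= 1 of the prolongation whose brackets with n_{-2} all vanish is zero:
  by induction on k via its brackets with n_{-1} this reduces to degree 1, and there the double
  brackets with n_{-1} give a symmetric map R on n_{-1} each of whose slices R(a, -) is a
  derivation killing n_{-2}. The forms <J_z R(a, c), e> are then totally symmetric, and for
  three orthonormal z_1, z_2, z_3 the maps J_{z_1}^{-1} J_{z_2} and J_{z_1}^{-1} J_{z_3}
  anticommute and are self-adjoint for them, which forces R = 0. Both the anticommutation and
  the Clifford identity [J_z x, y] - [x, J_z y] = 2 kappa <x, y> z come from the general
  J^2-condition; the latter shows that every element of degree 0 acts on n_{-2} by an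
  infinitesimal conformal map. For an element A of degree 5, the triple brackets [[[[A, x],
  w_1], w_2], w_3] therefore form an element of the second prolongation of the conformal algebra
  of n_{-2}, which is zero since dim n_{-2} >= 3. Hence [[[A, w_1], w_2], w_3] = 0, and the
  first step gives A = 0. So the prolongation vanishes from degree 5 on, and each graded piece
  is finite dimensional.
\<close>

section \<open>Linear algebra\<close>

lemma nondegenerate_bilinear_form_represents:
  fixes B :: "'a::euclidean_space \<Rightarrow> 'a \<Rightarrow> real"
  assumes "bilinear B" and nondegenerate: "\<And>v. (\<And>y. B v y = 0) \<Longrightarrow> v = 0"
    and "linear f"
  shows "\<exists>v. \<forall>y. B v y = f y"
proof -
  have expand: "g y = y \<bullet> (\<Sum>e\<in>Basis. g e *\<^sub>R e)" if "linear g" for g :: "'a \<Rightarrow> real" and y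
    using Linear_Algebra.linear_componentwise[OF that, of y 1]
    by (simp add: inner_sum_right mult.commute)
  have B_right: "linear (B v)" for v
    using \<open>bilinear B\<close> unfolding bilinear_def by blast
  define A where "A v = (\<Sum>e\<in>Basis. B v e *\<^sub>R e)" for v
  have A: "B v y = y \<bullet> A v" for v y
    unfolding A_def using expand[OF B_right] .
  have "linear A"
    unfolding A_def using \<open>bilinear B\<close>
    by (intro linearI)
      (simp_all add: bilinear_ladd bilinear_lmul scaleR_add_left sum.distrib scaleR_sum_right)
  moreover have "inj A"
    unfolding linear_injective_0[OF \<open>linear A\<close>] using nondegenerate by (simp add: A)
  ultimately have "surj A"
    by (simp add: linear_injective_imp_surjective)
  then obtain v where "A v = (\<Sum>e\<in>Basis. f e *\<^sub>R e)"
    by (metis surjD)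
  then have "B v y = f y" for y
    by (simp add: A expand[OF \<open>linear f\<close>, of y])
  then show ?thesis by blast
qed

lemma symmetric_form_anticommuting_adjoints_vanish:
  fixes G :: "'a::uminus \<Rightarrow> 'a \<Rightarrow> 'a \<Rightarrow> real"
  assumes G_sym12: "\<And>a c e. G a c e = G c a e" and G_sym23: "\<And>a c e. G a c e = G a e c"
    and G_minus: "\<And>a c e. G a c (- e) = - G a c e"
    and M_adj: "\<And>a c e. G a c (M e) = G a e (M c)"
    and N_adj: "\<And>a c e. G a c (N e) = G a e (N c)"
    and anticommute: "\<And>u. N (M u) = - M (N u)"
  shows "G x y (M (N u)) = 0"
proof -
  have move23: "G a (K c) e = G a c (K e)"
    and move13: "G (K a) c e = G a c (K e)"
    if K_adj: "\<And>a c e. G a c (K e) = G a e (K c)" for K a c e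
  proof -
    show m23: "G a (K c) e = G a c (K e)" for a c e
      using K_adj[of a c e] G_sym23[of a e "K c"] by simp
    show "G (K a) c e = G a c (K e)"
      using G_sym12[of "K a" c e] m23[of c a e] G_sym12[of c a "K e"] by simp
  qed
  \<comment> \<open>Moving M and N from the first to the third argument in two different orders:\<close>
  have "G (M (N x)) y u = G x y (N (M u))"
    using move13[OF M_adj, of "N x" y u] move13[OF N_adj, of x y "M u"] by simp
  moreover have "G (M (N x)) y u = G x y (M (N u))"
    using move13[OF M_adj, of "N x" y u] move23[OF M_adj, of "N x" y u]
      move13[OF N_adj, of x "M y" u] move23[OF M_adj, of x y "N u"] by simp
  ultimately show ?thesis
    using anticommute[of u] G_minus[of x y "M (N u)"] by simp
qed

locale pseudo_orthonormal_basis =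
  fixes B :: "'a::euclidean_space \<Rightarrow> 'a \<Rightarrow> real" and Z :: "'a set"
  assumes bilinear_form: "bilinear B"
    and form_commute: "B x y = B y x"
    and finite_basis: "finite Z"
    and span_basis: "span Z = UNIV"
    and orthogonal_basis: "z \<in> Z \<Longrightarrow> z' \<in> Z \<Longrightarrow> z \<noteq> z' \<Longrightarrow> B z z' = 0"
    and basis_norm: "z \<in> Z \<Longrightarrow> B z z = 1 \<or> B z z = -1"
begin

sublocale form: bounded_bilinear B
  using bilinear_form by (simp flip: bilinear_conv_bounded_bilinear)

lemma linear_vanishing_on_basis:
  assumes "linear h" and "\<And>z. z \<in> Z \<Longrightarrow> h z = 0"
  shows "h w = 0"
proof -
  have "w \<in> span Z"
    unfolding span_basis ..
  then show ?thesis
    by (rule linear_eq_0_on_span[OF assms(1), rotated]) (rule assms(2))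
qed

lemma orthogonal_to_basis_eq_0:
  assumes "\<And>z. z \<in> Z \<Longrightarrow> B z w = 0"
  shows "w = 0"
proof -
  obtain u where u: "w = (\<Sum>z\<in>Z. u z *\<^sub>R z)"
    using span_finite[OF finite_basis] span_basis by blast
  have "u z = 0" if "z \<in> Z" for z
  proof -
    have "B z w = (\<Sum>z'\<in>Z. u z' * B z z')"
      by (simp add: u form.sum_right form.scaleR_right)
    also have "\<dots> = u z * B z z"
    proof -
      have "(\<Sum>z'\<in>Z - {z}. u z' * B z z') = 0"
        using that by (intro sum.neutral) (auto simp: orthogonal_basis)
      then show ?thesis by (simp add: sum.remove[OF finite_basis that])
    qed
    finally show ?thesis
      using assms[OF that] basis_norm[OF that] by auto
  qed
  then show ?thesis by (simp add: u)
qed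

lemma basis_nonempty: "Z \<noteq> {}"
proof
  assume "Z = {}"
  then have "(UNIV :: 'a set) = {0}"
    using span_basis by simp
  then show False
    using nonzero_Basis nonempty_Basis by blast
qed

lemma exists_basis_vector_avoiding:
  assumes "3 \<le> card Z"
  obtains r where "r \<in> Z" "r \<noteq> p" "r \<noteq> q"
proof -
  have "card {p, q} < card Z"
    using assms by (simp add: card_insert_if)
  then have "\<not> Z \<subseteq> {p, q}"
    by (meson card_mono finite.emptyI finite.insertI leD)
  with that show ?thesis by blast
qed

definition in_conformal_algebra :: "('a \<Rightarrow> 'a) \<Rightarrow> bool" where
  "in_conformal_algebra L \<longleftrightarrow> (\<exists>\<mu>. \<forall>d\<in>Z. \<forall>e\<in>Z. B (L d) e + B d (L e) = 2 * \<mu> * B d e)"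

lemma christoffel_symmetrization:
  assumes sums: "\<And>c d e. c \<in> Z \<Longrightarrow> d \<in> Z \<Longrightarrow> e \<in> Z \<Longrightarrow> C c d e + C c e d = 2 * \<phi> c * B d e"
    and sym: "\<And>c d e. C c d e = C d c e"
    and "c \<in> Z" "d \<in> Z" "e \<in> Z"
  shows "C c d e = \<phi> c * B d e - \<phi> e * B c d + \<phi> d * B e c"
  using sums[of c d e] sums[of e c d] sums[of d e c] sym[of c e d] sym[of e d c] sym[of d c e]
    \<open>c \<in> Z\<close> \<open>d \<in> Z\<close> \<open>e \<in> Z\<close>
  by (simp add: algebra_simps)

lemma symmetric_vanishing_on_basis:
  assumes Q_sym12: "\<And>a c d. Q a c d = Q c a d" and Q_sym23: "\<And>a c d. Q a c d = Q a d c"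
    and Q_linear: "\<And>a c. linear (Q a c)"
    and on_basis: "\<And>a c d. a \<in> Z \<Longrightarrow> c \<in> Z \<Longrightarrow> d \<in> Z \<Longrightarrow> Q a c d = 0"
  shows "Q a c d = 0"
proof -
  have two_on_basis: "Q a c d = 0" if "a \<in> Z" "c \<in> Z" for a c d
    using linear_vanishing_on_basis[OF Q_linear] on_basis that by blast
  have one_on_basis: "Q a c d = 0" if "a \<in> Z" for a c d
  proof -
    have "Q a d z = 0" if "z \<in> Z" for z
      using two_on_basis[OF \<open>a \<in> Z\<close> that] Q_sym23 by metis
    then show ?thesis
      using linear_vanishing_on_basis[OF Q_linear, of a d c] Q_sym23 by metis
  qed
  show ?thesis
    using linear_vanishing_on_basis[OF Q_linear, of c d a] one_on_basis by (metis Q_sym12 Q_sym23)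
qed

context
  fixes Q :: "'a \<Rightarrow> 'a \<Rightarrow> 'a \<Rightarrow> 'a" and \<phi> :: "'a \<Rightarrow> 'a \<Rightarrow> real"
  assumes card: "3 \<le> card Z"
    and Q_sym12: "\<And>a c d. Q a c d = Q c a d" and Q_sym23: "\<And>a c d. Q a c d = Q a d c"
    and conformal_factor: "\<forall>a c. \<forall>d\<in>Z. \<forall>e\<in>Z. B (Q a c d) e + B d (Q a c e) = 2 * \<phi> a c * B d e"
begin

lemma symmetric_conformal_form_on_basis:
  assumes "c \<in> Z" "d \<in> Z" "e \<in> Z"
  shows "B (Q a c d) e = \<phi> a c * B d e - \<phi> a e * B c d + \<phi> a d * B e c"
proof (rule christoffel_symmetrization[where C = "\<lambda>c d e. B (Q a c d) e", OF _ _ assms])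
  show "B (Q a c d) e + B (Q a c e) d = 2 * \<phi> a c * B d e" if "d \<in> Z" "e \<in> Z" for c d e
  proof -
    have "B (Q a c d) e + B d (Q a c e) = 2 * \<phi> a c * B d e"
      using conformal_factor that by blast
    then show ?thesis
      by (simp add: form_commute[of d "Q a c e"])
  qed
  show "B (Q a c d) e = B (Q a d c) e" for c d e
    by (simp add: Q_sym23[of a c])
qed

lemma conformal_factor_off_diagonal:
  assumes "p \<in> Z" "q \<in> Z" "p \<noteq> q"
  shows "\<phi> q p = 0"
proof -
  obtain r where r: "r \<in> Z" "r \<noteq> p" "r \<noteq> q"
    using card by (rule exists_basis_vector_avoiding)
  have "B (Q q p r) r = \<phi> q p * B r r"
    using symmetric_conformal_form_on_basis[of p r r q] assms r orthogonal_basis[of p r]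
    by (simp add: form_commute[of r p])
  moreover have "B (Q r p q) r = 0"
    using symmetric_conformal_form_on_basis[of p q r r] assms r orthogonal_basis
    by (simp add: form_commute[of r])
  moreover have "Q q p r = Q r p q"
    by (metis Q_sym12 Q_sym23)
  ultimately have "\<phi> q p * B r r = 0"
    by simp
  then show ?thesis
    using basis_norm[OF r(1)] by auto
qed

lemma conformal_factor_diagonal:
  assumes p: "p \<in> Z"
  shows "\<phi> p p = 0"
proof -
  have relation: "\<phi> p p * B r r = - \<phi> r r * B p p" if "p \<in> Z" "r \<in> Z" "p \<noteq> r" for p r
  proof -
    have "B (Q p r p) r = \<phi> p p * B r r"
      using symmetric_conformal_form_on_basis[of r p r p] that by (simp add: form_commute[of r p])
    moreover have "B (Q r p p) r = - \<phi> r r * B p p"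
      using symmetric_conformal_form_on_basis[of p p r r] that orthogonal_basis
        conformal_factor_off_diagonal
      by (simp add: form_commute[of r p])
    ultimately show ?thesis
      by (simp add: Q_sym12[of p r])
  qed
  obtain r where r: "r \<in> Z" "r \<noteq> p"
    using card by (rule exists_basis_vector_avoiding)
  obtain t where t: "t \<in> Z" "t \<noteq> p" "t \<noteq> r"
    using card by (rule exists_basis_vector_avoiding)
  show ?thesis
    using relation[OF p r(1)] relation[OF p t(1)] relation[OF r(1) t(1)]
      basis_norm[OF p] basis_norm[OF r(1)] basis_norm[OF t(1)] r t
    by (auto simp: algebra_simps)
qed

lemma symmetric_conformal_vanishes_on_basis:
  assumes "a \<in> Z" "c \<in> Z" "d \<in> Z"
  shows "Q a c d = 0"
proof (rule orthogonal_to_basis_eq_0)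
  fix e assume "e \<in> Z"
  then have "B (Q a c d) e = 0"
    using symmetric_conformal_form_on_basis[of c d e a] assms conformal_factor_off_diagonal
      conformal_factor_diagonal
    by (metis add.right_neutral diff_zero mult_zero_left)
  then show "B e (Q a c d) = 0"
    by (simp add: form_commute)
qed

end

lemma second_prolongation_conformal_vanishes:
  assumes card: "3 \<le> card Z"
    and Q_sym12: "\<And>a c d. Q a c d = Q c a d" and Q_sym23: "\<And>a c d. Q a c d = Q a d c"
    and Q_linear: "\<And>a c. linear (Q a c)"
    and Q_conformal: "\<And>a c. in_conformal_algebra (Q a c)"
  shows "Q a c d = 0"
proof -
  from Q_conformal obtain \<phi>
    where \<phi>: "\<forall>a c. \<forall>d\<in>Z. \<forall>e\<in>Z. B (Q a c d) e + B d (Q a c e) = 2 * \<phi> a c * B d e"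
    unfolding in_conformal_algebra_def by metis
  have on_basis: "Q a c d = 0" if "a \<in> Z" "c \<in> Z" "d \<in> Z" for a c d
    using card Q_sym12 Q_sym23 \<phi> that
    by (rule symmetric_conformal_vanishes_on_basis[where Q = Q and \<phi> = \<phi>])
  show ?thesis
    using Q_sym12 Q_sym23 Q_linear on_basis by (rule symmetric_vanishing_on_basis)
qed

end

section \<open>The Tanaka prolongation of a graded 2-step nilpotent algebra\<close>

locale graded_2step_alg =
  fixes b :: "'v::euclidean_space \<Rightarrow> 'v \<Rightarrow> 'w::euclidean_space"
  assumes graded_2step: "graded_2step b"
begin

sublocale bracket: bounded_bilinear b
  using graded_2step by (simp add: graded_2step_def flip: bilinear_conv_bounded_bilinear)

lemma bracket_skew: "b x y = - b y x"
  using graded_2step unfolding graded_2step_def by (elim conjE allE)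

lemma bracket_self [simp]: "b x x = 0"
proof -
  have "b x x + b x x = 0"
    using bracket_skew[of x x] by (simp add: eq_neg_iff_add_eq_0)
  then have "2 *\<^sub>R b x x = 0"
    by (simp add: scaleR_2)
  then show ?thesis by simp
qed

lemma span_brackets: "span {b x y | x y. True} = UNIV"
  using graded_2step unfolding graded_2step_def by (elim conjE)

lemma bracket_center_free:
  assumes "\<And>y. b x y = 0"
  shows "x = 0"
proof -
  have "\<forall>x. (\<forall>y. b x y = 0) \<longrightarrow> x = 0"
    using graded_2step unfolding graded_2step_def by (elim conjE)
  with assms show ?thesis by blast
qed

lemma bracket_left_eqI: "(\<And>y. b u y = b u' y) \<Longrightarrow> u = u'"
  using bracket_center_free[of "u - u'"] by (simp add: bracket.diff_left)

lemma linear_vanishing_on_brackets: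
  assumes "linear h" and "\<And>x y. h (b x y) = 0"
  shows "h w = 0"
proof -
  have "w \<in> span {b x y | x y. True}"
    unfolding span_brackets ..
  then show ?thesis
    by (rule linear_eq_0_on_span[OF assms(1), rotated]) (auto simp: assms(2))
qed

abbreviation prol :: "nat \<Rightarrow> ('v list \<Rightarrow> 'w) set" where
  "prol \<equiv> tanaka_prol b" \<comment> \<open>prol m is the component of degree m - 2\<close>

text \<open>For an element T of the prolongation, bracket_v T y and bracket_w T w encode [T, y] and
  [T, w]; the latter is determined by the Jacobi identity [T, [x, y]] = [[T, x], y] - [[T, y], x].\<close>

definition bracket_v :: "('v list \<Rightarrow> 'w) \<Rightarrow> 'v \<Rightarrow> 'v list \<Rightarrow> 'w" where
  "bracket_v T y = (\<lambda>ys. T (y # ys))"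

definition bracket_w :: "('v list \<Rightarrow> 'w) \<Rightarrow> 'w \<Rightarrow> 'v list \<Rightarrow> 'w" where
  "bracket_w T = (SOME \<phi>. (\<forall>ys. linear (\<lambda>w. \<phi> w ys)) \<and>
     (\<forall>x y. \<phi> (b x y) = (\<lambda>ys. T (x # y # ys) - T (y # x # ys))))"

lemma bracket_w_eqI:
  assumes lin: "\<And>ys. linear (\<lambda>w. \<phi> w ys)"
    and on_brackets: "\<And>x y. \<phi> (b x y) = (\<lambda>ys. T (x # y # ys) - T (y # x # ys))"
  shows "bracket_w T = \<phi>"
proof -
  let ?P = "\<lambda>\<psi>. (\<forall>ys. linear (\<lambda>w. \<psi> w ys)) \<and>
     (\<forall>x y. \<psi> (b x y) = (\<lambda>ys. T (x # y # ys) - T (y # x # ys)))"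
  have "?P (bracket_w T)"
    unfolding bracket_w_def by (rule someI[of ?P \<phi>]) (use assms in blast)
  then have lin_diff: "linear (\<lambda>w. bracket_w T w ys - \<phi> w ys)"
    and brackets_diff: "bracket_w T (b x y) ys - \<phi> (b x y) ys = 0" for x y ys
    using lin on_brackets by (simp_all add: linear_compose_sub)
  have "bracket_w T w ys - \<phi> w ys = 0" for w ys
    using linear_vanishing_on_brackets[OF lin_diff brackets_diff] .
  then show ?thesis by (simp add: fun_eq_iff)
qed

lemma prol_Suc_Nil: "T \<in> prol (Suc m) \<Longrightarrow> T [] = 0"
  by (cases m) auto

lemma prol_Suc_bracket_v: "T \<in> prol (Suc m) \<Longrightarrow> bracket_v T y \<in> prol m"
  by (cases m) (auto simp: bracket_v_def split: list.split)

lemma prol_Suc_linear_head: "T \<in> prol (Suc m) \<Longrightarrow> linear (\<lambda>y. T (y # ys))"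
proof (cases m)
  case 0
  moreover assume "T \<in> prol (Suc m)"
  ultimately obtain x where "\<And>ys. T ys = (case ys of [y] \<Rightarrow> b x y | _ \<Rightarrow> 0)"
    by auto
  then show ?thesis
    using bracket.bounded_linear_right[of x]
    by (cases ys) (simp_all add: bounded_linear.linear linear_zero)
qed auto

lemma prol_SucSuc_bracket_w:
  assumes "T \<in> prol (Suc (Suc m))"
  shows bracket_w_linear: "linear (\<lambda>w. bracket_w T w ys)"
    and bracket_w_in_prol: "bracket_w T w \<in> prol m"
    and bracket_w_bracket: "bracket_w T (b x y) = (\<lambda>ys. T (x # y # ys) - T (y # x # ys))"
    and bracket_w_bracket_Cons:
      "bracket_w T (b x y) (u # ys) = T (u # x # y # ys) - T (u # y # x # ys)"
proof -
  from assms obtain \<phi> where \<phi>: "\<forall>ys. linear (\<lambda>w. \<phi> w ys)" "\<forall>w. \<phi> w \<in> prol m"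
    "\<forall>x y. \<phi> (b x y) = (\<lambda>ys. T (x # y # ys) - T (y # x # ys))"
    "\<forall>u x y. (\<lambda>ys. T (u # x # y # ys) - T (u # y # x # ys)) = (\<lambda>ys. \<phi> (b x y) (u # ys))"
    by auto
  have "bracket_w T = \<phi>"
    using \<phi> by (intro bracket_w_eqI) auto
  with \<phi> show "linear (\<lambda>w. bracket_w T w ys)" "bracket_w T w \<in> prol m"
    "bracket_w T (b x y) = (\<lambda>ys. T (x # y # ys) - T (y # x # ys))"
    "bracket_w T (b x y) (u # ys) = T (u # x # y # ys) - T (u # y # x # ys)"
    by (simp_all only:) (metis (no_types))
qed

lemma bracket_w_add:
  assumes "T \<in> prol (Suc (Suc m))" and "T' \<in> prol (Suc (Suc m))"
  shows "bracket_w (\<lambda>ys. T ys + T' ys) w = (\<lambda>ys. bracket_w T w ys + bracket_w T' w ys)"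
proof -
  have "bracket_w (\<lambda>ys. T ys + T' ys) = (\<lambda>w ys. bracket_w T w ys + bracket_w T' w ys)"
    by (intro bracket_w_eqI linear_compose_add)
      (simp_all add: bracket_w_linear[OF assms(1)] bracket_w_linear[OF assms(2)]
        bracket_w_bracket[OF assms(1)] bracket_w_bracket[OF assms(2)] fun_eq_iff)
  then show ?thesis by simp
qed

lemma bracket_w_diff:
  assumes "T \<in> prol (Suc (Suc m))" and "T' \<in> prol (Suc (Suc m))"
  shows "bracket_w (\<lambda>ys. T ys - T' ys) w = (\<lambda>ys. bracket_w T w ys - bracket_w T' w ys)"
proof -
  have "bracket_w (\<lambda>ys. T ys - T' ys) = (\<lambda>w ys. bracket_w T w ys - bracket_w T' w ys)"
    by (intro bracket_w_eqI linear_compose_sub)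
      (simp_all add: bracket_w_linear[OF assms(1)] bracket_w_linear[OF assms(2)]
        bracket_w_bracket[OF assms(1)] bracket_w_bracket[OF assms(2)] fun_eq_iff)
  then show ?thesis by simp
qed

lemma bracket_w_scaleR:
  assumes "T \<in> prol (Suc (Suc m))"
  shows "bracket_w (\<lambda>ys. r *\<^sub>R T ys) w = (\<lambda>ys. r *\<^sub>R bracket_w T w ys)"
proof -
  have "bracket_w (\<lambda>ys. r *\<^sub>R T ys) = (\<lambda>w ys. r *\<^sub>R bracket_w T w ys)"
    by (intro bracket_w_eqI linear_compose_scale_right)
      (simp_all add: bracket_w_linear[OF assms] bracket_w_bracket[OF assms] fun_eq_iff
        scaleR_diff_right)
  then show ?thesis by simp
qed

lemma bracket_w_bracket_v:
  assumes "T \<in> prol (Suc (Suc m))"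
  shows "bracket_w (bracket_v T u) w = bracket_v (bracket_w T w) u"
proof -
  have "bracket_w (\<lambda>ys. T (u # ys)) = (\<lambda>w ys. bracket_w T w (u # ys))"
    by (rule bracket_w_eqI)
      (simp_all add: bracket_w_linear[OF assms] bracket_w_bracket_Cons[OF assms])
  then show ?thesis by (simp add: bracket_v_def)
qed

lemma bracket_w_commute:
  assumes T: "T \<in> prol (Suc (Suc (Suc (Suc m))))"
  shows "bracket_w (bracket_w T w) w' = bracket_w (bracket_w T w') w"
proof -
  have Tw: "bracket_w T w \<in> prol (Suc (Suc m))" for w
    using T by (rule bracket_w_in_prol)
  have "bracket_w (bracket_w T w) = (\<lambda>w'. bracket_w (bracket_w T w') w)"
  proof (rule bracket_w_eqI)
    fix ys
    have "bracket_w T (w1 + w2) = (\<lambda>ys. bracket_w T w1 ys + bracket_w T w2 ys)" for w1 w2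
      using linear_add[OF bracket_w_linear[OF T]] by (simp add: fun_eq_iff)
    moreover have "bracket_w T (r *\<^sub>R w1) = (\<lambda>ys. r *\<^sub>R bracket_w T w1 ys)" for r w1
      using linear_scale[OF bracket_w_linear[OF T]] by (simp add: fun_eq_iff)
    ultimately show "linear (\<lambda>w'. bracket_w (bracket_w T w') w ys)"
      by (intro linearI) (simp_all add: bracket_w_add[OF Tw Tw] bracket_w_scaleR[OF Tw])
  next
    fix x y
    have xy: "bracket_v (bracket_v T x) y \<in> prol (Suc (Suc m))" for x y
      using T by (intro prol_Suc_bracket_v)
    have E2: "bracket_w (bracket_v (bracket_v T x) y) w = bracket_v (bracket_v (bracket_w T w) x) y"
      for x y
      by (simp only: bracket_w_bracket_v[OF prol_Suc_bracket_v[OF T]] bracket_w_bracket_v[OF T])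
    have "bracket_w T (b x y) =
        (\<lambda>ys. bracket_v (bracket_v T x) y ys - bracket_v (bracket_v T y) x ys)"
      by (simp add: bracket_w_bracket[OF T] bracket_v_def)
    then show "bracket_w (bracket_w T (b x y)) w =
        (\<lambda>ys. bracket_w T w (x # y # ys) - bracket_w T w (y # x # ys))"
      by (simp only: bracket_w_diff[OF xy xy] E2) (simp add: bracket_v_def)
  qed
  then show ?thesis by simp
qed

lemma prol_eq_0_if_bracket_v_eq_0:
  assumes "T \<in> prol (Suc m)" and "\<And>y. bracket_v T y = (\<lambda>_. 0)"
  shows "T = (\<lambda>_. 0)"
proof
  fix ys
  show "T ys = 0"
    using prol_Suc_Nil[OF assms(1)] assms(2) by (cases ys) (auto simp: bracket_v_def fun_eq_iff)
qed

lemma prol_vanishes_above: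
  assumes vanish: "\<And>T. T \<in> prol N \<Longrightarrow> T = (\<lambda>_. 0)"
  shows "N \<le> m \<Longrightarrow> T \<in> prol m \<Longrightarrow> T = (\<lambda>_. 0)"
proof (induction m arbitrary: T rule: dec_induct)
  case base
  then show ?case by (rule vanish)
next
  case (step m)
  then have "bracket_v T y = (\<lambda>_. 0)" for y
    by (intro step.IH prol_Suc_bracket_v)
  with step.prems show ?case by (rule prol_eq_0_if_bracket_v_eq_0)
qed

lemma bracket_w_vanishing_propagates:
  assumes deg1: "\<And>T. T \<in> prol (Suc (Suc (Suc 0))) \<Longrightarrow> (\<And>w. bracket_w T w = (\<lambda>_. 0)) \<Longrightarrow>
      T = (\<lambda>_. 0)"
  shows "T \<in> prol (Suc (Suc (Suc k))) \<Longrightarrow> (\<And>w. bracket_w T w = (\<lambda>_. 0)) \<Longrightarrow> T = (\<lambda>_. 0)"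
proof (induction k arbitrary: T)
  case 0
  then show ?case by (rule deg1)
next
  case (Suc k)
  have "bracket_v T y = (\<lambda>_. 0)" for y
  proof (rule Suc.IH)
    show "bracket_v T y \<in> prol (Suc (Suc (Suc k)))"
      using Suc.prems(1) by (rule prol_Suc_bracket_v)
    show "bracket_w (bracket_v T y) w = (\<lambda>_. 0)" for w
      by (simp only: bracket_w_bracket_v[OF Suc.prems(1)] Suc.prems(2)) (simp add: bracket_v_def)
  qed
  with Suc.prems(1) show ?case by (rule prol_eq_0_if_bracket_v_eq_0)
qed

lemma prol_1_eq_0:
  assumes "T \<in> prol (Suc 0)" and "\<And>y. T [y] = 0"
  shows "T = (\<lambda>_. 0)"
proof -
  from assms(1) obtain x where x: "\<And>ys. T ys = (case ys of [y] \<Rightarrow> b x y | _ \<Rightarrow> 0)"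
    by auto
  have "b x y = 0" for y
    using x[of "[y]"] assms(2)[of y] by simp
  then have "x = 0" by (rule bracket_center_free)
  then show ?thesis by (simp add: fun_eq_iff x bracket.zero_left split: list.split)
qed

text \<open>An element D of degree 0 is a derivation of n, acting by deriv_v D on n_{-1} and by
  deriv_w D on n_{-2}.\<close>

definition deriv_v :: "('v list \<Rightarrow> 'w) \<Rightarrow> 'v \<Rightarrow> 'v" where
  "deriv_v D y = (THE x. \<forall>y'. D [y, y'] = b x y')"

definition deriv_w :: "('v list \<Rightarrow> 'w) \<Rightarrow> 'w \<Rightarrow> 'w" where
  "deriv_w D w = bracket_w D w []"

lemma prol_2_deriv_v:
  assumes "D \<in> prol (Suc (Suc 0))"
  shows "D [y, y'] = b (deriv_v D y) y'"
proof -
  from prol_Suc_bracket_v[OF assms, of y] obtain x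
    where x: "\<And>ys. D (y # ys) = (case ys of [y'] \<Rightarrow> b x y' | _ \<Rightarrow> 0)"
    by (auto simp: bracket_v_def)
  have "deriv_v D y = x"
    unfolding deriv_v_def
  proof (rule the_equality)
    show "\<forall>y'. D [y, y'] = b x y'" using x by simp
    show "x' = x" if "\<forall>y'. D [y, y'] = b x' y'" for x'
      using that x by (intro bracket_left_eqI) simp
  qed
  with x show ?thesis by simp
qed

lemma linear_deriv_v:
  assumes D: "D \<in> prol (Suc (Suc 0))"
  shows "linear (deriv_v D)"
proof -
  have head: "linear (\<lambda>y. D [y, y'])" for y'
    using D by (rule prol_Suc_linear_head)
  show ?thesis
  proof (rule linearI)
    show "deriv_v D (x + x') = deriv_v D x + deriv_v D x'" for x x'
      using linear_add[OF head]
      by (intro bracket_left_eqI) (simp add: prol_2_deriv_v[OF D] bracket.add_left)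
    show "deriv_v D (r *\<^sub>R x) = r *\<^sub>R deriv_v D x" for r x
      using linear_scale[OF head]
      by (intro bracket_left_eqI) (simp add: prol_2_deriv_v[OF D] bracket.scaleR_left)
  qed
qed

lemma linear_deriv_w: "D \<in> prol (Suc (Suc 0)) \<Longrightarrow> linear (deriv_w D)"
  unfolding deriv_w_def by (rule bracket_w_linear)

lemma deriv_w_bracket:
  assumes "D \<in> prol (Suc (Suc 0))"
  shows "deriv_w D (b x y) = b (deriv_v D x) y + b x (deriv_v D y)"
proof -
  have "deriv_w D (b x y) = D [x, y] - D [y, x]"
    using bracket_w_bracket[OF assms, of x y] by (simp add: deriv_w_def)
  also have "\<dots> = b (deriv_v D x) y + b x (deriv_v D y)"
    by (simp add: prol_2_deriv_v[OF assms] bracket_skew[of x "deriv_v D y"])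
  finally show ?thesis .
qed

end

definition basis_lists :: "nat \<Rightarrow> 'a::euclidean_space list set" where
  "basis_lists m = {es. set es \<subseteq> Basis \<and> length es = m}"

lemma finite_basis_lists: "finite (basis_lists m)"
  unfolding basis_lists_def by (rule finite_lists_length_eq) simp

lemma basis_lists_0: "basis_lists 0 = {[]}"
  unfolding basis_lists_def by auto

lemma basis_lists_Suc: "basis_lists (Suc m) = (\<lambda>(e, es). e # es) ` (Basis \<times> basis_lists m)"
proof (intro set_eqI iffI)
  fix xs assume "xs \<in> basis_lists (Suc m)"
  then obtain e es where "xs = e # es" "e \<in> Basis" "es \<in> basis_lists m"
    unfolding basis_lists_def by (cases xs) auto
  then show "xs \<in> (\<lambda>(e, es). e # es) ` (Basis \<times> basis_lists m)" by force
qed (auto simp: basis_lists_def)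

lemma sum_basis_lists_Suc:
  "(\<Sum>xs\<in>basis_lists (Suc m). g xs) = (\<Sum>e\<in>Basis. \<Sum>es\<in>basis_lists m. g (e # es))"
proof -
  have inj: "inj_on (\<lambda>(e, es). e # es) (Basis \<times> basis_lists m)"
    by (auto simp: inj_on_def)
  show ?thesis
    unfolding basis_lists_Suc sum.reindex[OF inj] sum.cartesian_product by (intro sum.cong) auto
qed

lemma linear_sum_Basis:
  assumes "linear f"
  shows "f y = (\<Sum>e\<in>Basis. (y \<bullet> e) *\<^sub>R f e)"
proof -
  have "f y = f (\<Sum>e\<in>Basis. (y \<bullet> e) *\<^sub>R e)"
    by (simp add: euclidean_representation)
  then show ?thesis
    by (simp add: linear_sum[OF assms] linear_scale[OF assms])
qed

definition monomial :: "'a::euclidean_space list \<Rightarrow> 'b::real_vector \<Rightarrow> 'a list \<Rightarrow> 'b" where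
  "monomial es f ys =
     (if length ys = length es then (\<Prod>i<length es. ys ! i \<bullet> es ! i) *\<^sub>R f else 0)"

lemma sum_combination_over_image:
  fixes h :: "'a \<Rightarrow> 'b \<Rightarrow> 'c::real_vector"
  assumes "finite D"
  shows "\<exists>c. (\<lambda>t. \<Sum>x\<in>D. a x *\<^sub>R h x t) = (\<lambda>t. \<Sum>\<beta>\<in>h ` D. c \<beta> *\<^sub>R \<beta> t)"
proof (intro exI ext)
  fix t
  have "(\<Sum>x\<in>D. a x *\<^sub>R h x t) = (\<Sum>\<beta>\<in>h ` D. \<Sum>x\<in>{x \<in> D. h x = \<beta>}. a x *\<^sub>R h x t)"
    using \<open>finite D\<close> by (rule sum.image_gen)
  also have "\<dots> = (\<Sum>\<beta>\<in>h ` D. sum a {x \<in> D. h x = \<beta>} *\<^sub>R \<beta> t)"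
    by (simp add: scaleR_sum_left)
  finally show "(\<Sum>x\<in>D. a x *\<^sub>R h x t) = (\<Sum>\<beta>\<in>h ` D. sum a {x \<in> D. h x = \<beta>} *\<^sub>R \<beta> t)" .
qed

context graded_2step_alg
begin

lemma prol_expansion:
  "T \<in> prol m \<Longrightarrow>
    T ys = (if length ys = m then (\<Sum>es\<in>basis_lists m. (\<Prod>i<m. ys ! i \<bullet> es ! i) *\<^sub>R T es) else 0)"
proof (induction m arbitrary: T ys)
  case 0
  then show ?case by (cases ys) (auto simp: basis_lists_0)
next
  case (Suc m)
  show ?case
  proof (cases ys)
    case Nil
    then show ?thesis using prol_Suc_Nil[OF Suc.prems] by simp
  next
    case (Cons y ys')
    have IH: "T (e # zs) = (if length zs = m
        then (\<Sum>es\<in>basis_lists m. (\<Prod>i<m. zs ! i \<bullet> es ! i) *\<^sub>R T (e # es)) else 0)" for e zs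
      using Suc.IH[OF prol_Suc_bracket_v[OF Suc.prems], of e zs] by (simp add: bracket_v_def)
    show ?thesis
    proof (cases "length ys' = m")
      case False
      then show ?thesis using IH Cons by simp
    next
      case True
      have "T ys = (\<Sum>e\<in>Basis. (y \<bullet> e) *\<^sub>R T (e # ys'))"
        unfolding Cons by (rule linear_sum_Basis[OF prol_Suc_linear_head[OF Suc.prems]])
      also have "\<dots> = (\<Sum>e\<in>Basis. \<Sum>es\<in>basis_lists m.
          ((y \<bullet> e) * (\<Prod>i<m. ys' ! i \<bullet> es ! i)) *\<^sub>R T (e # es))"
        using IH True by (simp add: scaleR_sum_right)
      also have "\<dots> = (\<Sum>xs\<in>basis_lists (Suc m). (\<Prod>i<Suc m. ys ! i \<bullet> xs ! i) *\<^sub>R T xs)"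
        by (simp del: prod.lessThan_Suc add: sum_basis_lists_Suc Cons prod.lessThan_Suc_shift)
      finally show ?thesis using True Cons by simp
    qed
  qed
qed

lemma prol_monomial_expansion:
  assumes "T \<in> prol m"
  shows "T ys = (\<Sum>(es, f)\<in>basis_lists m \<times> Basis. (T es \<bullet> f) *\<^sub>R monomial es f ys)"
proof (cases "length ys = m")
  case True
  have "(\<Sum>(es, f)\<in>basis_lists m \<times> Basis. (T es \<bullet> f) *\<^sub>R monomial es f ys) =
      (\<Sum>es\<in>basis_lists m. \<Sum>f\<in>Basis. (T es \<bullet> f) *\<^sub>R monomial es f ys)"
    by (rule sum.cartesian_product[symmetric])
  also have "\<dots> = (\<Sum>es\<in>basis_lists m. (\<Prod>i<m. ys ! i \<bullet> es ! i) *\<^sub>R T es)"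
  proof (rule sum.cong[OF refl])
    fix es :: "'v list" assume "es \<in> basis_lists m"
    then have "length es = m" by (simp add: basis_lists_def)
    then have "(\<Sum>f\<in>Basis. (T es \<bullet> f) *\<^sub>R monomial es f ys) =
        (\<Prod>i<m. ys ! i \<bullet> es ! i) *\<^sub>R (\<Sum>f\<in>Basis. (T es \<bullet> f) *\<^sub>R f)"
      using True by (simp add: monomial_def scaleR_sum_right mult.commute)
    then show "(\<Sum>f\<in>Basis. (T es \<bullet> f) *\<^sub>R monomial es f ys) = (\<Prod>i<m. ys ! i \<bullet> es ! i) *\<^sub>R T es"
      by (simp add: euclidean_representation)
  qed
  also have "\<dots> = T ys"
    using prol_expansion[OF assms, of ys] True by simp
  finally show ?thesis ..
next
  case False
  then have "\<forall>(es, f)\<in>basis_lists m \<times> Basis. (T es \<bullet> f) *\<^sub>R monomial es f ys = 0"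
    by (simp add: monomial_def basis_lists_def)
  then show ?thesis
    using prol_expansion[OF assms, of ys] False by (simp add: sum.neutral)
qed

lemma rigid_if_prol_vanishes:
  assumes vanish: "\<And>T. T \<in> prol N \<Longrightarrow> T = (\<lambda>_. 0)"
  shows "rigid b"
proof -
  define D where "D = (\<Union>m<N. basis_lists m :: 'v list set) \<times> (Basis :: 'w set)"
  have "finite D"
    unfolding D_def by (simp add: finite_basis_lists)
  have "\<exists>c. T = (\<lambda>ys. \<Sum>\<beta>\<in>case_prod monomial ` D. c \<beta> *\<^sub>R \<beta> ys)" if T: "T \<in> prol m" for m T
  proof (cases "N \<le> m")
    case True
    then have "T = (\<lambda>_. 0)"
      using prol_vanishes_above[OF vanish] T by blast
    then show ?thesis by (intro exI[of _ "\<lambda>_. 0"]) simp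
  next
    case False
    define a where "a = (\<lambda>(es, f). if length es = m then T es \<bullet> f else 0)"
    have "T ys = (\<Sum>x\<in>D. a x *\<^sub>R case_prod monomial x ys)" for ys
    proof -
      have "(\<Sum>x\<in>D. a x *\<^sub>R case_prod monomial x ys) =
          (\<Sum>x\<in>basis_lists m \<times> Basis. a x *\<^sub>R case_prod monomial x ys)"
        using False \<open>finite D\<close>
        by (intro sum.mono_neutral_right) (auto simp: D_def a_def basis_lists_def split: if_splits)
      also have "\<dots> = T ys"
        unfolding prol_monomial_expansion[OF T, of ys]
        by (intro sum.cong) (auto simp: a_def basis_lists_def)
      finally show ?thesis ..
    qed
    then have "T = (\<lambda>ys. \<Sum>x\<in>D. a x *\<^sub>R case_prod monomial x ys)" ..
    moreover obtain c
      where "(\<lambda>ys. \<Sum>x\<in>D. a x *\<^sub>R case_prod monomial x ys) =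
          (\<lambda>ys. \<Sum>\<beta>\<in>case_prod monomial ` D. c \<beta> *\<^sub>R \<beta> ys)"
      using sum_combination_over_image[OF \<open>finite D\<close>] by blast
    ultimately show ?thesis by (intro exI[of _ c]) (simp only:)
  qed
  with \<open>finite D\<close> show ?thesis
    unfolding rigid_def by blast
qed

end

section \<open>M-type and pseudo J-type algebras\<close>

locale mtype_alg =
  fixes b :: "'v::euclidean_space \<Rightarrow> 'v \<Rightarrow> 'w::euclidean_space"
    and Bf :: "'v \<times> 'w \<Rightarrow> 'v \<times> 'w \<Rightarrow> real"
  assumes mtype: "mtype_algebra b Bf"
begin

sublocale graded_2step_alg b
  using mtype by unfold_locales (simp add: mtype_algebra_def)

lemma Bf_bounded_bilinear: "bounded_bilinear Bf"
  using mtype by (simp add: mtype_algebra_def flip: bilinear_conv_bounded_bilinear)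

definition ipv :: "'v \<Rightarrow> 'v \<Rightarrow> real" where
  "ipv x y = Bf (x, 0) (y, 0)"

definition ipw :: "'w \<Rightarrow> 'w \<Rightarrow> real" where
  "ipw z z' = Bf (0, z) (0, z')"

sublocale ipv: bounded_bilinear ipv
  unfolding ipv_def[abs_def]
  by (intro bounded_bilinear.comp[OF Bf_bounded_bilinear] bounded_linear_Pair bounded_linear_ident
      bounded_linear_zero)

sublocale ipw: bounded_bilinear ipw
  unfolding ipw_def[abs_def]
  by (intro bounded_bilinear.comp[OF Bf_bounded_bilinear] bounded_linear_Pair bounded_linear_ident
      bounded_linear_zero)

lemma ipv_commute: "ipv x y = ipv y x"
  using mtype unfolding mtype_algebra_def ipv_def by (elim conjE) blast

lemma ipw_commute: "ipw z z' = ipw z' z"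
  using mtype unfolding mtype_algebra_def ipw_def by (elim conjE) blast

lemma ipv_nondegenerate:
  assumes "\<And>y. ipv v y = 0"
  shows "v = 0"
proof -
  have "Bf (v, 0) (y, z) = 0" for y z
  proof -
    have "Bf (v, 0) (y, z) = ipv v y + Bf (v, 0) (0, z)"
      using bounded_bilinear.add_right[OF Bf_bounded_bilinear, of "(v, 0)" "(y, 0)" "(0, z)"]
      by (simp add: ipv_def)
    moreover have "Bf (v, 0) (0, z) = 0"
      using mtype unfolding mtype_algebra_def by (elim conjE) blast
    ultimately show ?thesis
      using assms by simp
  qed
  then have "\<forall>q. Bf (v, 0) q = 0"
    by (simp add: split_paired_all)
  then have "(v, 0 :: 'w) = 0"
    using mtype unfolding mtype_algebra_def by (elim conjE) blast
  then show ?thesis by (simp add: zero_prod_def)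
qed

lemma ipv_eqI: "(\<And>y. ipv u y = ipv u' y) \<Longrightarrow> u = u'"
  using ipv_nondegenerate[of "u - u'"] by (simp add: ipv.diff_left)

lemma exists_non_isotropic: "\<exists>x. ipv x x \<noteq> 0"
proof (rule ccontr)
  assume "\<nexists>x. ipv x x \<noteq> 0"
  then have "ipv x y = 0" for x y
    using ipv.add_left[of x y "x + y"] ipv.add_right[of x x y] ipv.add_right[of y x y]
    by (simp add: ipv_commute[of y x])
  then have "(x :: 'v) = 0" for x
    using ipv_nondegenerate by blast
  then show False
    using nonzero_Basis nonempty_Basis by blast
qed

abbreviation J :: "'w \<Rightarrow> 'v \<Rightarrow> 'v" where
  "J \<equiv> Jmap b Bf"

lemma J_ipv: "ipv (J z x) y = ipw z (b x y)"
proof -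
  have "bilinear ipv"
    by (simp add: bilinear_conv_bounded_bilinear ipv.bounded_bilinear_axioms)
  moreover have "linear (\<lambda>y. ipw z (b x y))"
    using bounded_linear_compose[OF ipw.bounded_linear_right bracket.bounded_linear_right]
    by (rule bounded_linear.linear)
  ultimately obtain v where v: "\<forall>y. ipv v y = ipw z (b x y)"
    using nondegenerate_bilinear_form_represents[of ipv] ipv_nondegenerate by blast
  have "\<forall>y. Bf (J z x, 0) (y, 0) = Bf (0, z) (0, b x y)"
    unfolding Jmap_def
  proof (rule theI)
    show "\<forall>y. Bf (v, 0) (y, 0) = Bf (0, z) (0, b x y)"
      using v by (simp add: ipv_def ipw_def)
    show "v' = v" if "\<forall>y. Bf (v', 0) (y, 0) = Bf (0, z) (0, b x y)" for v'
      using that v by (intro ipv_eqI) (simp add: ipv_def ipw_def)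
  qed
  then show ?thesis
    by (simp add: ipv_def ipw_def)
qed

sublocale J: bounded_bilinear J
proof -
  have "linear (J z)" for z
    by (intro linearI; rule ipv_eqI)
      (simp_all add: J_ipv ipv.add_left ipv.scaleR_left bracket.add_left bracket.scaleR_left
        ipw.add_right ipw.scaleR_right)
  moreover have "linear (\<lambda>z. J z x)" for x
    by (intro linearI; rule ipv_eqI)
      (simp_all add: J_ipv ipv.add_left ipv.scaleR_left ipw.add_left ipw.scaleR_left)
  ultimately show "bounded_bilinear J"
    by (simp add: bilinear_def flip: bilinear_conv_bounded_bilinear)
qed

lemma J_skew_adjoint: "ipv (J z x) y = - ipv x (J z y)"
proof -
  have "ipv x (J z y) = ipw z (b y x)"
    by (simp add: J_ipv ipv_commute[of x])
  then show ?thesis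
    by (simp add: J_ipv bracket_skew[of x y] ipw.minus_right)
qed

lemma ipv_J_self [simp]: "ipv (J z x) x = 0"
  by (simp add: J_ipv ipw.zero_right)

end

locale pseudo_J_alg = mtype_alg b Bf
  for b :: "'v::euclidean_space \<Rightarrow> 'v \<Rightarrow> 'w::euclidean_space"
    and Bf :: "'v \<times> 'w \<Rightarrow> 'v \<times> 'w \<Rightarrow> real" +
  fixes Z :: "'w set"
  assumes orthonormal_basis: "pseudo_orthonormal_basis ipw Z"
    and J_square_cases: "z \<in> Z \<Longrightarrow> (\<forall>x. J z (J z x) = x) \<or> (\<forall>x. J z (J z x) = - x)"
    and J2_condition: "general_J2_condition b Bf"
begin

sublocale basis: pseudo_orthonormal_basis ipw Z
  by (fact orthonormal_basis)

definition J_sign :: "'w \<Rightarrow> real" where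
  "J_sign z = (if \<forall>x. J z (J z x) = x then 1 else -1)"

lemma J_sign_cases: "J_sign z = 1 \<or> J_sign z = -1"
  by (simp add: J_sign_def)

lemma J_sign_square [simp]: "J_sign z * J_sign z = 1"
  by (simp add: J_sign_def)

lemma J_sign_square_mult [simp]: "J_sign z * (J_sign z * r) = r"
  by (simp flip: mult.assoc)

lemma J_square: "z \<in> Z \<Longrightarrow> J z (J z x) = J_sign z *\<^sub>R x"
  using J_square_cases[of z] by (auto simp: J_sign_def)

lemma basis_norm_square [simp]: "z \<in> Z \<Longrightarrow> ipw z z * ipw z z = 1"
  using basis.basis_norm[of z] by auto

lemma ipv_J_J_self:
  assumes "ipw z z' = 0"
  shows "ipv (J z (J z' x)) x = 0"
proof -
  obtain z'' where "J z (J z' x) = J z'' x"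
    using J2_condition assms unfolding general_J2_condition_def ipw_def by blast
  then show ?thesis by simp
qed

lemma J_anticommute:
  assumes "z \<in> Z" "z' \<in> Z" "z \<noteq> z'"
  shows "J z (J z' x) = - J z' (J z x)"
proof -
  have orth: "ipw z z' = 0"
    using assms by (rule basis.orthogonal_basis)
  have "ipv (J z (J z' x) + J z' (J z x)) y = 0" for y
  proof -
    have "ipv (J z (J z' (x + y))) (x + y) = 0"
      using orth by (rule ipv_J_J_self)
    then have "ipv (J z (J z' x)) y + ipv (J z (J z' y)) x = 0"
      using ipv_J_J_self[OF orth, of x] ipv_J_J_self[OF orth, of y]
      by (simp add: J.add_right ipv.add_left ipv.add_right)
    moreover have "ipv (J z (J z' y)) x = ipv (J z' (J z x)) y"
      using J_skew_adjoint[of z "J z' y" x] J_skew_adjoint[of z' y "J z x"]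
      by (simp add: ipv_commute[of y])
    ultimately show ?thesis
      by (simp add: ipv.add_left)
  qed
  then have "J z (J z' x) + J z' (J z x) = 0"
    by (rule ipv_nondegenerate)
  then show ?thesis
    by (simp add: eq_neg_iff_add_eq_0)
qed

lemma J_sign_norm_eq:
  assumes z: "z \<in> Z" and z': "z' \<in> Z"
  shows "J_sign z * ipw z z = J_sign z' * ipw z' z'"
proof (cases "z = z'")
  case False
  define c where "c = ipw z z * ipw z' z'"
  have orth: "ipw z z' = 0" "ipw z' z = 0"
    using basis.orthogonal_basis z z' False by auto
  have "ipw (z + z') (z - c *\<^sub>R z') = ipw z z - c * ipw z' z'"
    using orth by (simp add: ipw.add_left ipw.diff_right ipw.scaleR_right)
  also have "\<dots> = 0"
    using z' by (simp add: c_def mult.assoc)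
  finally have orth_sum: "ipw (z + z') (z - c *\<^sub>R z') = 0" .
  have "(J_sign z - c * J_sign z') * ipv x x = 0" for x
  proof -
    have "0 = ipv (J (z + z') (J (z - c *\<^sub>R z') x)) x"
      using ipv_J_J_self[OF orth_sum] by simp
    also have "\<dots> = ipv (J z (J z x) - c *\<^sub>R J z (J z' x) + J z' (J z x) - c *\<^sub>R J z' (J z' x)) x"
      by (simp add: J.add_left J.diff_left J.scaleR_left J.diff_right J.scaleR_right algebra_simps)
    also have "\<dots> = (J_sign z - c * J_sign z') * ipv x x"
      using ipv_J_J_self[OF orth(1), of x] ipv_J_J_self[OF orth(2), of x]
        J_square[OF z] J_square[OF z']
      by (simp add: ipv.add_left ipv.diff_left ipv.scaleR_left algebra_simps)
    finally show ?thesis ..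
  qed
  with exists_non_isotropic have "J_sign z = c * J_sign z'"
    by auto
  then show ?thesis
    using basis_norm_square[OF z] by (simp add: c_def algebra_simps)
qed simp

definition kappa :: real where
  "kappa = (let z = SOME z. z \<in> Z in J_sign z * ipw z z)"

lemma kappa: "z \<in> Z \<Longrightarrow> J_sign z * ipw z z = kappa"
  unfolding kappa_def Let_def by (rule J_sign_norm_eq) (auto intro: someI)

lemma kappa_cases: "kappa = 1 \<or> kappa = -1"
proof -
  obtain z where "z \<in> Z"
    using basis.basis_nonempty by blast
  then show ?thesis
    using kappa[of z] J_sign_cases[of z] basis.basis_norm[of z] by auto
qed

lemma bracket_J_clifford:
  assumes z: "z \<in> Z"
  shows "b (J z x) y - b x (J z y) = (2 * kappa * ipv x y) *\<^sub>R z"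
proof -
  have "ipw k (b (J z x) y - b x (J z y) - (2 * kappa * ipv x y) *\<^sub>R z) = 0" if k: "k \<in> Z" for k
  proof -
    have "ipw k (b (J z x) y - b x (J z y)) = ipv (J k (J z x) + J z (J k x)) y"
      using J_skew_adjoint[of z "J k x" y]
      by (simp add: ipw.diff_right ipv.add_left J_ipv[symmetric] ipv_commute[of "J k x"])
    also have "\<dots> = ipw k ((2 * kappa * ipv x y) *\<^sub>R z)"
    proof (cases "k = z")
      case True
      have "kappa * ipw z z = J_sign z"
        using kappa[OF z] basis_norm_square[OF z] by (metis mult.assoc mult.right_neutral)
      then show ?thesis
        using True J_square[OF z] by (simp add: ipv.add_left ipv.scaleR_left ipw.scaleR_right)
    next
      case False
      then show ?thesis
        using J_anticommute[OF k z False] basis.orthogonal_basis[OF k z False]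
        by (simp add: ipw.scaleR_right ipv.zero_left)
    qed
    finally show ?thesis
      by (simp add: ipw.diff_right)
  qed
  then show ?thesis
    using basis.orthogonal_to_basis_eq_0 by fastforce
qed

context
  fixes N :: "'v \<Rightarrow> 'v" and L :: "'w \<Rightarrow> 'w"
  assumes N_linear: "linear N" and L_linear: "linear L"
    and derivation: "\<And>x y. L (b x y) = b (N x) y + b x (N y)"
begin

interpretation N: linear N by (fact N_linear)

interpretation L: linear L by (fact L_linear)

definition N_sym :: "'v \<Rightarrow> 'v \<Rightarrow> real" where
  "N_sym x y = ipv (N x) y + ipv (N y) x"

lemma ipw_derivation_bracket: "ipw z (L (b x y)) = ipv (N y) (J z x) - ipv (N x) (J z y)"
proof -
  have "ipw z (b (N x) y) = - ipv (N x) (J z y)"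
    by (simp add: J_ipv[symmetric] J_skew_adjoint)
  moreover have "ipw z (b x (N y)) = ipv (N y) (J z x)"
    by (simp add: J_ipv[symmetric] ipv_commute)
  ultimately show ?thesis
    by (simp add: derivation ipw.add_right)
qed

lemma derivation_clifford:
  assumes "z \<in> Z"
  shows "2 * kappa * ipv x y * ipw z' (L z) =
    (ipv (N y) (J z' (J z x)) - ipv (N (J z x)) (J z' y)) -
    (ipv (N (J z y)) (J z' x) - ipv (N x) (J z' (J z y)))"
proof -
  have "L (b (J z x) y) - L (b x (J z y)) = (2 * kappa * ipv x y) *\<^sub>R L z"
    using bracket_J_clifford[OF assms, of x y] by (metis L.diff L.scale)
  then have "ipw z' (L (b (J z x) y)) - ipw z' (L (b x (J z y))) =
      2 * kappa * ipv x y * ipw z' (L z)"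
    by (metis ipw.diff_right ipw.scaleR_right real_scaleR_def)
  then show ?thesis
    by (simp add: ipw_derivation_bracket)
qed

lemma N_sym_J:
  assumes "z \<in> Z"
  shows "N_sym (J z x) (J z y) = J_sign z * N_sym x y - 2 * kappa * ipv x y * ipw z (L z)"
  using derivation_clifford[OF assms, of x y z] J_square[OF assms]
  by (simp add: N_sym_def ipv.scaleR_right algebra_simps)

lemma J_sign_derivation_diagonal:
  assumes z: "z \<in> Z" and z': "z' \<in> Z"
  shows "J_sign z * ipw z (L z) = J_sign z' * ipw z' (L z')"
proof (cases "z = z'")
  case False
  obtain x where x: "ipv x x \<noteq> 0"
    using exists_non_isotropic by blast
  have norm_J: "ipv (J w x) (J w x) = - J_sign w * ipv x x" if "w \<in> Z" for w
    using J_skew_adjoint[of w x "J w x"] J_square[OF that] by (simp add: ipv.scaleR_right)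
  have N_sym_neg: "N_sym (- a) (- a) = N_sym a a" for a
    by (simp add: N_sym_def N.neg ipv.minus_left ipv.minus_right)
  have "N_sym (J z (J z' x)) (J z (J z' x)) = N_sym (J z' (J z x)) (J z' (J z x))"
    using J_anticommute[OF z z' False, of x] N_sym_neg by simp
  then have "4 * kappa * ipv x x * (J_sign z' * ipw z (L z) - J_sign z * ipw z' (L z')) = 0"
    using N_sym_J[OF z, of "J z' x" "J z' x"] N_sym_J[OF z', of x x] norm_J[OF z']
      N_sym_J[OF z', of "J z x" "J z x"] N_sym_J[OF z, of x x] norm_J[OF z]
    by (simp add: algebra_simps)
  then have "J_sign z' * ipw z (L z) = J_sign z * ipw z' (L z')"
    using x kappa_cases by auto
  then have "J_sign z * (J_sign z' * (J_sign z' * ipw z (L z))) =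
      J_sign z' * (J_sign z * (J_sign z * ipw z' (L z')))"
    by (simp add: algebra_simps)
  then show ?thesis
    by simp
qed simp

lemma derivation_off_diagonal:
  assumes z: "z \<in> Z" and z': "z' \<in> Z" and ne: "z \<noteq> z'"
  shows "ipw z' (L z) + ipw z (L z') = 0"
proof -
  obtain x where x: "ipv x x \<noteq> 0"
    using exists_non_isotropic by blast
  define u where "u = J z (J z' x)"
  have anti: "J z' (J z x) = - u"
    unfolding u_def using J_anticommute[OF z z' ne, of x] by simp
  have "2 * kappa * ipv x x * (ipw z' (L z) + ipw z (L z')) =
      - (N_sym (J z x) (J z' x) + N_sym (J z' x) (J z x))"
    using derivation_clifford[OF z, of x x z'] derivation_clifford[OF z', of x x z] anti
    unfolding u_def by (simp add: N_sym_def ipv.minus_right algebra_simps)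
  also have "N_sym (J z x) (J z' x) = N_sym x u - 2 * kappa * J_sign z * ipw z (L z) * ipv x u"
  proof -
    have "J z (J_sign z *\<^sub>R u) = J z' x"
      unfolding u_def using J_square[OF z] by (simp add: J.scaleR_right)
    then show ?thesis
      using N_sym_J[OF z, of x "J_sign z *\<^sub>R u"]
      by (simp add: N_sym_def N.scale ipv.scaleR_left ipv.scaleR_right algebra_simps)
  qed
  also have "N_sym (J z' x) (J z x) =
      N_sym x (- u) + 2 * kappa * J_sign z' * ipw z' (L z') * ipv x u"
  proof -
    have "u = - J z' (J z x)"
      using anti by simp
    then have "J z' u = - (J_sign z' *\<^sub>R J z x)"
      by (simp add: J.minus_right J_square[OF z'])
    then have "J z' (J_sign z' *\<^sub>R - u) = J z x"
      by (simp add: J.scaleR_right J.minus_right)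
    then show ?thesis
      using N_sym_J[OF z', of x "J_sign z' *\<^sub>R - u"]
      by (simp add: N_sym_def N.scale N.neg ipv.scaleR_left ipv.scaleR_right ipv.minus_left
          ipv.minus_right algebra_simps)
  qed
  also have "N_sym x u - 2 * kappa * J_sign z * ipw z (L z) * ipv x u +
      (N_sym x (- u) + 2 * kappa * J_sign z' * ipw z' (L z') * ipv x u) = 0"
    using J_sign_derivation_diagonal[OF z z']
    by (simp add: N_sym_def N.neg ipv.minus_left ipv.minus_right algebra_simps)
  finally show ?thesis
    using x kappa_cases by auto
qed

lemma derivation_conformal: "basis.in_conformal_algebra L"
proof -
  obtain z0 where z0: "z0 \<in> Z"
    using basis.basis_nonempty by blast
  define \<mu> where "\<mu> = kappa * J_sign z0 * ipw z0 (L z0)"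
  have "ipw (L d) e + ipw d (L e) = 2 * \<mu> * ipw d e" if d: "d \<in> Z" and e: "e \<in> Z" for d e
  proof (cases "d = e")
    case True
    have "ipw d d = kappa * J_sign d"
      using kappa[OF d] by (metis J_sign_square_mult mult.commute)
    moreover have "kappa * kappa = 1"
      using kappa_cases by auto
    ultimately have "\<mu> * ipw d d = J_sign d * (J_sign z0 * ipw z0 (L z0))"
      by (simp add: \<mu>_def algebra_simps)
    also have "\<dots> = ipw d (L d)"
      using J_sign_derivation_diagonal[OF d z0] by (metis J_sign_square_mult)
    finally show ?thesis
      using True ipw_commute[of "L d" d] by simp
  next
    case False
    then show ?thesis
      using derivation_off_diagonal[OF d e False] basis.orthogonal_basis[OF d e False]
      by (simp add: ipw_commute[of "L d"])
  qed
  then show ?thesis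
    unfolding basis.in_conformal_algebra_def by blast
qed

end

lemma deriv_w_conformal:
  assumes "D \<in> prol (Suc (Suc 0))"
  shows "basis.in_conformal_algebra (deriv_w D)"
  by (rule derivation_conformal[OF linear_deriv_v[OF assms] linear_deriv_w[OF assms]
        deriv_w_bracket[OF assms]])

definition J_inv_comp :: "'w \<Rightarrow> 'w \<Rightarrow> 'v \<Rightarrow> 'v" where
  "J_inv_comp z z' x = J_sign z *\<^sub>R J z (J z' x)" \<comment> \<open>J_z^{-1} J_{z'}\<close>

lemma ipv_J_inv_comp: "z \<in> Z \<Longrightarrow> ipv (J z u) (J_inv_comp z z' e) = ipv (J z' u) e"
  by (simp add: J_inv_comp_def ipv.scaleR_right J_skew_adjoint J_square)

lemma J_inv_comp_anticommute:
  assumes "z1 \<in> Z" "z2 \<in> Z" "z3 \<in> Z" "z2 \<noteq> z1" "z3 \<noteq> z1" "z3 \<noteq> z2"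
  shows "J_inv_comp z1 z3 (J_inv_comp z1 z2 v) = - J_inv_comp z1 z2 (J_inv_comp z1 z3 v)"
proof -
  have "J z1 (J z3 (J z1 (J z2 v))) = - J_sign z1 *\<^sub>R J z3 (J z2 v)"
    using J_anticommute[of z3 z1] J_square[of z1] assms by (simp add: J.minus_right)
  moreover have "J z1 (J z2 (J z1 (J z3 v))) = J_sign z1 *\<^sub>R J z3 (J z2 v)"
    using J_anticommute[of z2 z1] J_anticommute[of z2 z3] J_square[of z1] assms
    by (simp add: J.minus_right)
  ultimately show ?thesis
    by (simp add: J_inv_comp_def J.scaleR_right)
qed

lemma J_inv_comp_invert:
  assumes "z1 \<in> Z" "z2 \<in> Z" "z3 \<in> Z" "z2 \<noteq> z1"
  shows "J_inv_comp z1 z2 (J_inv_comp z1 z3 (J z3 (J z2 e))) =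
    - (J_sign z1 * J_sign z2 * J_sign z3) *\<^sub>R e"
  using J_anticommute[of z2 z1] J_square[of z1] J_square[of z2] J_square[of z3] assms
  by (simp add: J_inv_comp_def J.scaleR_right J.minus_right)

lemma symmetric_annihilating_map_vanishes:
  assumes card: "3 \<le> card Z"
    and R_sym: "\<And>y u. R y u = R u y"
    and R_annihilates: "\<And>y x x'. b (R y x) x' = b (R y x') x"
  shows "R y u = 0"
proof -
  obtain z1 where z1: "z1 \<in> Z"
    using basis.basis_nonempty by blast
  obtain z2 where z2: "z2 \<in> Z" "z2 \<noteq> z1"
    using card by (rule basis.exists_basis_vector_avoiding)
  obtain z3 where z3: "z3 \<in> Z" "z3 \<noteq> z1" "z3 \<noteq> z2"
    using card by (rule basis.exists_basis_vector_avoiding)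
  define G where "G z a c e = ipv (J z (R a c)) e" for z a c e
  have G_sym12: "G z a c e = G z c a e" for z a c e
    by (simp add: G_def R_sym[of a c])
  have G_sym23: "G z a c e = G z a e c" for z a c e
    by (simp add: G_def J_ipv R_annihilates[of a c e])
  have G_minus: "G z1 a c (- e) = - G z1 a c e" for a c e
    by (simp add: G_def ipv.minus_right)
  have adjoint: "G z1 a c (J_inv_comp z1 z e) = G z1 a e (J_inv_comp z1 z c)" for z a c e
    using G_sym23[of z a c e] by (simp add: G_def ipv_J_inv_comp[OF z1])
  have G_vanishes: "G z1 y u (J_inv_comp z1 z2 (J_inv_comp z1 z3 v)) = 0" for v
    using G_sym12 G_sym23 G_minus adjoint adjoint
      J_inv_comp_anticommute[OF z1 z2(1) z3(1) z2(2) z3(2,3)]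
    by (rule symmetric_form_anticommuting_adjoints_vanish)
  have "G z1 y u ((J_sign z1 * J_sign z2 * J_sign z3) *\<^sub>R e) = 0" for e
    using G_vanishes[of "J z3 (J z2 e)"]
    by (simp add: J_inv_comp_invert[OF z1 z2(1) z3(1) z2(2)] G_def ipv.minus_right)
  then have "ipv (J z1 (R y u)) e = 0" for e
    using J_sign_cases[of z1] J_sign_cases[of z2] J_sign_cases[of z3]
    by (auto simp: G_def ipv.scaleR_right)
  then have "J z1 (R y u) = 0"
    by (rule ipv_nondegenerate)
  then have "J z1 (J z1 (R y u)) = 0"
    by (simp add: J.zero_right)
  then show ?thesis
    using J_square[OF z1] J_sign_cases[of z1] by auto
qed

lemma prol_3_vanishes_if_bracket_w_vanishes:
  assumes card: "3 \<le> card Z"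
    and B: "B \<in> prol (Suc (Suc (Suc 0)))" and bracket_w_B: "\<And>w. bracket_w B w = (\<lambda>_. 0)"
  shows "B = (\<lambda>_. 0)"
proof -
  define R where "R y u = deriv_v (bracket_v B y) u" for y u
  have By: "bracket_v B y \<in> prol (Suc (Suc 0))" for y
    using B by (rule prol_Suc_bracket_v)
  have B_R: "B [y, u, y'] = b (R y u) y'" for y u y'
    using prol_2_deriv_v[OF By] by (simp add: R_def bracket_v_def)
  have "R y u = 0" for y u
  proof (rule symmetric_annihilating_map_vanishes[OF card, of R])
    show "R y u = R u y" for y u
    proof (rule bracket_left_eqI)
      fix y'
      have "B [y, u, y'] - B [u, y, y'] = 0"
        using fun_cong[OF bracket_w_bracket[OF B, of y u], of "[y']"] bracket_w_B by simp
      then show "b (R y u) y' = b (R u y) y'"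
        by (simp add: B_R)
    qed
    show "b (R y x) x' = b (R y x') x" for y x x'
    proof -
      have "deriv_w (bracket_v B y) (b x x') = 0"
        by (simp only: deriv_w_def bracket_w_bracket_v[OF B] bracket_w_B) (simp add: bracket_v_def)
      then have "b (R y x) x' + b x (R y x') = 0"
        by (simp add: deriv_w_bracket[OF By] R_def)
      then show ?thesis
        by (simp add: bracket_skew[of x "R y x'"])
    qed
  qed
  then have "bracket_v (bracket_v B y) u = (\<lambda>_. 0)" for y u
    using prol_1_eq_0[OF prol_Suc_bracket_v[OF By]] B_R
    by (simp add: bracket_v_def bracket.zero_left)
  then show ?thesis
    by (intro prol_eq_0_if_bracket_v_eq_0[OF B] prol_eq_0_if_bracket_v_eq_0[OF By])
qed

lemma prol_vanishes_if_bracket_w_vanishes: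
  assumes "3 \<le> card Z"
    and "T \<in> prol (Suc (Suc (Suc k)))" and "\<And>w. bracket_w T w = (\<lambda>_. 0)"
  shows "T = (\<lambda>_. 0)"
proof (rule bracket_w_vanishing_propagates[OF _ assms(2,3)])
  show "T' = (\<lambda>_. 0)"
    if "T' \<in> prol (Suc (Suc (Suc 0)))" "\<And>w. bracket_w T' w = (\<lambda>_. 0)" for T'
    using assms(1) that by (rule prol_3_vanishes_if_bracket_w_vanishes)
qed

lemma prol_6_deriv_w_bracket_w_vanishes:
  assumes card: "3 \<le> card Z" and A: "A \<in> prol (Suc (Suc (Suc (Suc (Suc (Suc 0))))))"
  shows "deriv_w (bracket_w (bracket_w A w1) w2) w3 = 0"
proof (rule basis.second_prolongation_conformal_vanishes[OF card,
      of "\<lambda>w1 w2. deriv_w (bracket_w (bracket_w A w1) w2)"])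
  have A_w: "bracket_w A w \<in> prol (Suc (Suc (Suc (Suc 0))))" for w
    using A by (rule bracket_w_in_prol)
  have A_ww: "bracket_w (bracket_w A w) w' \<in> prol (Suc (Suc 0))" for w w'
    using A_w by (rule bracket_w_in_prol)
  show "deriv_w (bracket_w (bracket_w A a) c) d = deriv_w (bracket_w (bracket_w A c) a) d" for a c d
    by (simp add: bracket_w_commute[OF A])
  show "deriv_w (bracket_w (bracket_w A a) c) d = deriv_w (bracket_w (bracket_w A a) d) c" for a c d
    by (simp add: deriv_w_def bracket_w_commute[OF A_w])
  show "linear (deriv_w (bracket_w (bracket_w A a) c))" for a c
    using A_ww by (rule linear_deriv_w)
  show "basis.in_conformal_algebra (deriv_w (bracket_w (bracket_w A a) c))" for a c
    using A_ww by (rule deriv_w_conformal)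
qed

lemma prol_7_vanishes:
  assumes card: "3 \<le> card Z" and "A \<in> prol 7"
  shows "A = (\<lambda>_. 0)"
proof -
  have "(7::nat) = Suc (Suc (Suc (Suc (Suc (Suc (Suc 0))))))"
    by simp
  with \<open>A \<in> prol 7\<close> have A: "A \<in> prol (Suc (Suc (Suc (Suc (Suc (Suc (Suc 0)))))))"
    by (simp only:)
  have A_w: "bracket_w A w \<in> prol (Suc (Suc (Suc (Suc (Suc 0)))))" for w
    using A by (rule bracket_w_in_prol)
  have A_ww: "bracket_w (bracket_w A w) w' \<in> prol (Suc (Suc (Suc 0)))" for w w'
    using A_w by (rule bracket_w_in_prol)
  have "bracket_w (bracket_w (bracket_w A w1) w2) w3 [x] = 0" for x w1 w2 w3
  proof -
    have "bracket_w (bracket_w (bracket_w A w1) w2) w3 [x] =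
        bracket_v (bracket_w (bracket_w (bracket_w A w1) w2) w3) x []"
      by (simp add: bracket_v_def)
    also have "\<dots> = deriv_w (bracket_w (bracket_w (bracket_v A x) w1) w2) w3"
      by (simp only: deriv_w_def bracket_w_bracket_v[OF A, symmetric]
          bracket_w_bracket_v[OF A_w, symmetric] bracket_w_bracket_v[OF A_ww, symmetric])
    also have "\<dots> = 0"
      using card prol_Suc_bracket_v[OF A] by (rule prol_6_deriv_w_bracket_w_vanishes)
    finally show ?thesis .
  qed
  then have "bracket_w (bracket_w (bracket_w A w1) w2) w3 = (\<lambda>_. 0)" for w1 w2 w3
    by (rule prol_1_eq_0[OF bracket_w_in_prol[OF A_ww]])
  then have "bracket_w (bracket_w A w1) w2 = (\<lambda>_. 0)" for w1 w2
    by (rule prol_vanishes_if_bracket_w_vanishes[OF card A_ww])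
  then have "bracket_w A w1 = (\<lambda>_. 0)" for w1
    by (rule prol_vanishes_if_bracket_w_vanishes[OF card A_w])
  then show ?thesis
    by (rule prol_vanishes_if_bracket_w_vanishes[OF card A])
qed

theorem rigid_if_card_basis_ge_3: "3 \<le> card Z \<Longrightarrow> rigid b"
  by (rule rigid_if_prol_vanishes[OF prol_7_vanishes])

end

theorem theorem4p3:
  fixes b :: "'v::euclidean_space \<Rightarrow> 'v \<Rightarrow> 'w::euclidean_space"
    and Bf :: "'v \<times> 'w \<Rightarrow> 'v \<times> 'w \<Rightarrow> real"
  assumes "pseudo_Jtype b Bf"
    and "DIM('w) \<ge> 3"
    and "general_J2_condition b Bf"
  shows "rigid b"
proof -
  interpret mtype_alg b Bf
    using assms(1) by unfold_locales (simp add: pseudo_Jtype_def)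
  from assms(1) obtain Z where Z: "independent Z" "span Z = UNIV"
    "\<And>z z'. z \<in> Z \<Longrightarrow> z' \<in> Z \<Longrightarrow> z \<noteq> z' \<Longrightarrow> ipw z z' = 0"
    "\<And>z. z \<in> Z \<Longrightarrow> ipw z z = 1 \<or> ipw z z = -1"
    "\<And>z. z \<in> Z \<Longrightarrow> (\<forall>x. J z (J z x) = x) \<or> (\<forall>x. J z (J z x) = - x)"
    unfolding pseudo_Jtype_def ipw_def by blast
  have "pseudo_orthonormal_basis ipw Z"
    using Z independent_bound[OF Z(1)]
    by unfold_locales (simp_all add: bilinear_conv_bounded_bilinear ipw.bounded_bilinear_axioms
        ipw_commute)
  then interpret pseudo_J_alg b Bf Z
    using assms(1,3) Z(5)
    by (simp add: pseudo_J_alg_def pseudo_J_alg_axioms_def mtype_alg_def pseudo_Jtype_def)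
  have "card Z = DIM('w)"
    using basis_card_eq_dim[of Z UNIV] Z(1,2) by simp
  with assms(2) show ?thesis
    by (intro rigid_if_card_basis_ge_3) simp
qed

end
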